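(* Let $\mathbb{K}$ be a positive commutative monoid such that the inner consistency property holds for $\mathbb{K}$-relations via the northwest corner method. Let $R(X)$ and $S(Y)$ be two inner consistent $\mathbb{K}$-relations and let $W$ be a northwest corner join for $R$ and $S$. Then $|W'|\le|R'|+|S'|$, where $W',R',S'$ denote supports.
   Context: Positive: $p+q=0\Rightarrow p=q=0$. Canonical pre-order: $b\sqsubseteq c$ iff $b+a=c$ for some $a$. For a finite attribute set $X$ (attributes have domains), a $\mathbb{K}$-relation over $X$ is a finitely supported map $R$ from $X$-tuples to $K$, with support $R'=\{t:R(t)\ne0\}$; $t[Y]$ is restriction; marginals $R[Y](t)=\sum_{r\in R',r[Y]=t}R(r)$; $R(X),S(Y)$ are inner consistent if $R[X\cap Y]=S[X\cap Y]$. Northwest corner method on $b\in K^m$, $c\in K^n$ with $\sum b_i=\sum c_j$, producing $x_{ij}$: delete (setting to $0$) rows with $b_i=0$ and columns with $c_j=0$; if $m=1$ set $x_{1j}=c_j$; if $n=1$ set $x_{i1}=b_i$; otherwise if $b_1=c_1$ set $x_{11}=b_1$, rest of row 1 and column 1 to $0$, recurse on $(b_2..b_m),(c_2..c_n)$; else if $b_1\sqsubseteq c_1$ choose $a$ with $b_1+a=c_1$, set $x_{11}=b_1$, $x_{1j}=0$ ($j\ge2$), recurse on rows $2..m$ with $(b_2..b_m),(a,c_2..c_n)$; else if $c_1\sqsubseteq b_1$ symmetrically. A northwest corner join for inner consistent $R,S$ with $Z=X\cap Y$: for each $Z$-tuple $w$ in the support of $R[Z]$, enumerate in any order $u_1..u_p\in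 R'$ with $u_i[Z]=w$ and $v_1..v_q\in S'$ with $v_j[Z]=w$, run the method on $(R(u_i))_i,(S(v_j))_j$, and set $W(u_iv_j)=x_{ij}$; $W=0$ elsewhere. The inner consistency property holds via the northwest corner method if for any two inner consistent $\mathbb{K}$-relations the procedure can always be carried out and every resulting $W$ satisfies $W[X]=R$, $W[Y]=S$. *)

theory Defs
  imports Main
begin

definition tuples :: "('a \<Rightarrow> 'v set) \<Rightarrow> 'a set \<Rightarrow> ('a \<rightharpoonup> 'v) set" where
  "tuples D X = {t. dom t = X \<and> (\<forall>x\<in>X. the (t x) \<in> D x)}"

definition supp :: "('t \<Rightarrow> 'k::zero) \<Rightarrow> 't set" where
  "supp R = {t. R t \<noteq> 0}"

definition krel :: "('a \<Rightarrow> 'v set) \<Rightarrow> 'a set \<Rightarrow> (('a \<rightharpoonup> 'v) \<Rightarrow> 'k::zero) \<Rightarrow> bool" where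
  "krel D X R \<longleftrightarrow> finite (supp R) \<and> supp R \<subseteq> tuples D X"

definition marg :: "(('a \<rightharpoonup> 'v) \<Rightarrow> 'k::comm_monoid_add) \<Rightarrow> 'a set \<Rightarrow> ('a \<rightharpoonup> 'v) \<Rightarrow> 'k" where
  "marg R Y t = (\<Sum>r\<in>{r\<in>supp R. r |` Y = t}. R r)"

definition inner_cons :: "'a set \<Rightarrow> 'a set \<Rightarrow> (('a \<rightharpoonup> 'v) \<Rightarrow> 'k::comm_monoid_add)
    \<Rightarrow> (('a \<rightharpoonup> 'v) \<Rightarrow> 'k) \<Rightarrow> bool" where
  "inner_cons X Y R S \<longleftrightarrow> marg R (X \<inter> Y) = marg S (X \<inter> Y)"

definition kle :: "'k::comm_monoid_add \<Rightarrow> 'k \<Rightarrow> bool" where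
  "kle b c \<longleftrightarrow> (\<exists>a. b + a = c)"

text \<open>Rows and columns are lists of (original index, value) pairs. Each call of the
  method first deletes the zero rows/columns (nzf); the output matrix is a function
  on index pairs that is 0 at all entries not explicitly set.\<close>

definition nzf :: "(nat \<times> 'k::zero) list \<Rightarrow> (nat \<times> 'k) list" where
  "nzf xs = filter (\<lambda>p. snd p \<noteq> 0) xs"

definition enum :: "'k list \<Rightarrow> (nat \<times> 'k) list" where
  "enum xs = zip [0..<length xs] xs"

inductive nwc :: "(nat \<times> 'k::comm_monoid_add) list \<Rightarrow> (nat \<times> 'k) list \<Rightarrow> (nat \<times> nat \<Rightarrow> 'k) \<Rightarrow> bool"
where
  one_row: "nzf rs = [(i, v)] \<Longrightarrow>
     nwc rs cs (\<lambda>(i', j). if i' = i then (case map_of (nzf cs) j of Some w \<Rightarrow> w | None \<Rightarrow> 0) else 0)"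
| one_col: "nzf cs = [(j, w)] \<Longrightarrow> length (nzf rs) \<noteq> 1 \<Longrightarrow>
     nwc rs cs (\<lambda>(i, j'). if j' = j then (case map_of (nzf rs) i of Some v \<Rightarrow> v | None \<Rightarrow> 0) else 0)"
| eq: "nzf rs = (i, v) # B2 \<Longrightarrow> nzf cs = (j, w) # C2 \<Longrightarrow> B2 \<noteq> [] \<Longrightarrow> C2 \<noteq> [] \<Longrightarrow>
     v = w \<Longrightarrow> nwc B2 C2 x \<Longrightarrow> nwc rs cs (x((i, j) := v))"
| row_le: "nzf rs = (i, v) # B2 \<Longrightarrow> nzf cs = (j, w) # C2 \<Longrightarrow> B2 \<noteq> [] \<Longrightarrow> C2 \<noteq> [] \<Longrightarrow>
     v \<noteq> w \<Longrightarrow> v + a = w \<Longrightarrow> nwc B2 ((j, a) # C2) x \<Longrightarrow> nwc rs cs (x((i, j) := v))"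
| col_le: "nzf rs = (i, v) # B2 \<Longrightarrow> nzf cs = (j, w) # C2 \<Longrightarrow> B2 \<noteq> [] \<Longrightarrow> C2 \<noteq> [] \<Longrightarrow>
     v \<noteq> w \<Longrightarrow> \<not> kle v w \<Longrightarrow> w + a = v \<Longrightarrow> nwc ((i, a) # B2) C2 x \<Longrightarrow> nwc rs cs (x((i, j) := w))"

inductive nwc_step :: "(nat \<times> 'k::comm_monoid_add) list \<times> (nat \<times> 'k) list
    \<Rightarrow> (nat \<times> 'k) list \<times> (nat \<times> 'k) list \<Rightarrow> bool"
where
  "nzf rs = (i, v) # B2 \<Longrightarrow> nzf cs = (j, w) # C2 \<Longrightarrow> B2 \<noteq> [] \<Longrightarrow> C2 \<noteq> [] \<Longrightarrow>
     v = w \<Longrightarrow> nwc_step (rs, cs) (B2, C2)"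
| "nzf rs = (i, v) # B2 \<Longrightarrow> nzf cs = (j, w) # C2 \<Longrightarrow> B2 \<noteq> [] \<Longrightarrow> C2 \<noteq> [] \<Longrightarrow>
     v \<noteq> w \<Longrightarrow> v + a = w \<Longrightarrow> nwc_step (rs, cs) (B2, (j, a) # C2)"
| "nzf rs = (i, v) # B2 \<Longrightarrow> nzf cs = (j, w) # C2 \<Longrightarrow> B2 \<noteq> [] \<Longrightarrow> C2 \<noteq> [] \<Longrightarrow>
     v \<noteq> w \<Longrightarrow> \<not> kle v w \<Longrightarrow> w + a = v \<Longrightarrow> nwc_step (rs, cs) ((i, a) # B2, C2)"

definition nwc_stuck :: "(nat \<times> 'k::comm_monoid_add) list \<times> (nat \<times> 'k) list \<Rightarrow> bool" where
  "nwc_stuck s = (let B = nzf (fst s); C = nzf (snd s) in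
     \<not> (B = [] \<and> C = []) \<and> length B \<noteq> 1 \<and> length C \<noteq> 1 \<and>
     \<not> (B \<noteq> [] \<and> C \<noteq> [] \<and> (snd (hd B) = snd (hd C) \<or> kle (snd (hd B)) (snd (hd C))
                                \<or> kle (snd (hd C)) (snd (hd B)))))"

definition nwc_join :: "'a set \<Rightarrow> 'a set \<Rightarrow> (('a \<rightharpoonup> 'v) \<Rightarrow> 'k::comm_monoid_add)
    \<Rightarrow> (('a \<rightharpoonup> 'v) \<Rightarrow> 'k) \<Rightarrow> (('a \<rightharpoonup> 'v) \<Rightarrow> 'k) \<Rightarrow> bool" where
  "nwc_join X Y R S W \<longleftrightarrow> (let Z = X \<inter> Y in
     (\<exists>us vs xs.
        (\<forall>w\<in>supp (marg R Z).
           distinct (us w) \<and> set (us w) = {u\<in>supp R. u |` Z = w} \<and>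
           distinct (vs w) \<and> set (vs w) = {v\<in>supp S. v |` Z = w} \<and>
           nwc (enum (map R (us w))) (enum (map S (vs w))) (xs w) \<and>
           (\<forall>i<length (us w). \<forall>j<length (vs w). W ((us w ! i) ++ (vs w ! j)) = xs w (i, j))) \<and>
        (\<forall>t. (\<forall>w\<in>supp (marg R Z). \<forall>u\<in>supp R. \<forall>v\<in>supp S.
                 u |` Z = w \<longrightarrow> v |` Z = w \<longrightarrow> t \<noteq> u ++ v) \<longrightarrow> W t = 0)))"

text \<open>The inner consistency property via the northwest corner method (for attribute
  type 'a, value type 'v and monoid 'k): for any two inner consistent K-relations the
  procedure can always be carried out (no reachable state, for any enumeration order and
  any choices, is stuck) and every resulting W has marginals R and S.\<close>
definition nwc_icp :: "('a \<times> 'v \<times> 'k::comm_monoid_add) itself \<Rightarrow> bool" where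
  "nwc_icp _ \<longleftrightarrow> (\<forall>(D :: 'a \<Rightarrow> 'v set) X Y (R :: ('a \<rightharpoonup> 'v) \<Rightarrow> 'k) S.
     finite X \<and> finite Y \<and> krel D X R \<and> krel D Y S \<and> inner_cons X Y R S \<longrightarrow>
       (\<forall>w\<in>supp (marg R (X \<inter> Y)). \<forall>us vs.
           distinct us \<and> set us = {u\<in>supp R. u |` (X \<inter> Y) = w} \<and>
           distinct vs \<and> set vs = {v\<in>supp S. v |` (X \<inter> Y) = w} \<longrightarrow>
           (\<forall>s. nwc_step\<^sup>*\<^sup>* (enum (map R us), enum (map S vs)) s \<longrightarrow> \<not> nwc_stuck s)) \<and>
       (\<forall>W. nwc_join X Y R S W \<longrightarrow> marg W X = R \<and> marg W Y = S))"

end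

theory Submission
  imports Defs
begin

text \<open>On a block of p rows and q columns the northwest corner method sets at most p + q
  entries: every recursive call sets one entry and consumes a row or a column, and the
  terminal single-row (single-column) case sets at most q (p) entries. The blocks, indexed
  by the Z-tuples w, partition the supports of R and S, so summing over w gives the bound.\<close>

lemma length_nzf_le: "length (nzf xs) \<le> length xs"
  unfolding nzf_def by simp

lemma length_nzf_Cons_le: "nzf xs = y # ys \<Longrightarrow> Suc (length ys) \<le> length xs"
  using length_nzf_le[of xs] by simp

lemma length_enum [simp]: "length (enum xs) = length xs"
  unfolding enum_def by simp

lemma supp_fun_upd_subset: "supp (f(k := v)) \<subseteq> insert k (supp f)"
  unfolding supp_def by auto

lemma finite_supp_fun_upd:
  "finite (supp f) \<Longrightarrow> finite (supp (f(k := v)))"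
  by (rule finite_subset[OF supp_fun_upd_subset]) simp

lemma card_supp_fun_upd_le:
  assumes "finite (supp f)" and "card (supp f) \<le> n"
  shows "card (supp (f(k := v))) \<le> Suc n"
proof -
  have "card (supp (f(k := v))) \<le> card (insert k (supp f))"
    using assms by (intro card_mono supp_fun_upd_subset) simp
  also have "\<dots> \<le> Suc n"
    using assms by (simp add: card_insert_if)
  finally show ?thesis .
qed

lemma subset_image_set_card_le:
  assumes "A \<subseteq> f ` set xs"
  shows "finite A" and "card A \<le> length xs"
proof -
  show "finite A"
    using assms finite_subset by blast
  have "card A \<le> card (f ` set xs)"
    using assms by (intro card_mono) simp_all
  also have "\<dots> \<le> length xs"
    using card_image_le[of "set xs" f] card_length[of xs] by simp
  finally show "card A \<le> length xs" .
qed

lemma supp_single_row_subset: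
  "supp (\<lambda>(i', j). if i' = i then (case map_of xs j of Some w \<Rightarrow> w | None \<Rightarrow> 0) else 0)
     \<subseteq> (\<lambda>p. (i, fst p)) ` set xs" (is "supp ?x \<subseteq> _")
proof
  fix p assume "p \<in> supp ?x"
  then obtain j w where "p = (i, j)" and "map_of xs j = Some w"
    unfolding supp_def by (auto split: prod.splits if_splits option.splits)
  then have "(j, w) \<in> set xs" and "p = (i, fst (j, w))"
    by (simp_all add: map_of_SomeD)
  then show "p \<in> (\<lambda>p. (i, fst p)) ` set xs"
    by (rule rev_image_eqI)
qed

lemma supp_single_col_subset:
  "supp (\<lambda>(i, j'). if j' = j then (case map_of xs i of Some v \<Rightarrow> v | None \<Rightarrow> 0) else 0)
     \<subseteq> (\<lambda>p. (fst p, j)) ` set xs" (is "supp ?x \<subseteq> _")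
proof
  fix p assume "p \<in> supp ?x"
  then obtain i v where "p = (i, j)" and "map_of xs i = Some v"
    unfolding supp_def by (auto split: prod.splits if_splits option.splits)
  then have "(i, v) \<in> set xs" and "p = (fst (i, v), j)"
    by (simp_all add: map_of_SomeD)
  then show "p \<in> (\<lambda>p. (fst p, j)) ` set xs"
    by (rule rev_image_eqI)
qed

lemma finite_supp_nwc:
  assumes "nwc rs cs x"
  shows "finite (supp x)"
  using assms
proof (induction rule: nwc.induct)
  case one_row
  show ?case by (rule subset_image_set_card_le(1)[OF supp_single_row_subset])
next
  case one_col
  show ?case by (rule subset_image_set_card_le(1)[OF supp_single_col_subset])
next
  case eq
  show ?case using eq.IH by (rule finite_supp_fun_upd)
next
  case row_le
  show ?case using row_le.IH by (rule finite_supp_fun_upd)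
next
  case col_le
  show ?case using col_le.IH by (rule finite_supp_fun_upd)
qed

lemma card_supp_nwc_le:
  assumes "nwc rs cs x"
  shows "card (supp x) \<le> length rs + length cs"
  using assms
proof (induction rule: nwc.induct)
  case (one_row rs i v cs)
  show ?case
    using subset_image_set_card_le(2)[OF supp_single_row_subset, of i "nzf cs"] length_nzf_le[of cs]
    by linarith
next
  case (one_col cs j w rs)
  show ?case
    using subset_image_set_card_le(2)[OF supp_single_col_subset, of j "nzf rs"] length_nzf_le[of rs]
    by linarith
next
  case (eq rs i v B2 cs j w C2 x)
  have "card (supp (x((i, j) := v))) \<le> Suc (length B2 + length C2)"
    by (rule card_supp_fun_upd_le[OF finite_supp_nwc[OF eq.hyps(6)] eq.IH])
  then show ?case
    using length_nzf_Cons_le[OF eq.hyps(1)] length_nzf_Cons_le[OF eq.hyps(2)] by linarith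
next
  case (row_le rs i v B2 cs j w C2 a x)
  have "card (supp (x((i, j) := v))) \<le> Suc (length B2 + length C2 + 1)"
    using card_supp_fun_upd_le[OF finite_supp_nwc[OF row_le.hyps(7)] row_le.IH] by simp
  then show ?case
    using length_nzf_Cons_le[OF row_le.hyps(1)] length_nzf_Cons_le[OF row_le.hyps(2)] by linarith
next
  case (col_le rs i v B2 cs j w C2 a x)
  have "card (supp (x((i, j) := w))) \<le> Suc (length B2 + length C2 + 1)"
    using card_supp_fun_upd_le[OF finite_supp_nwc[OF col_le.hyps(8)] col_le.IH] by simp
  then show ?case
    using length_nzf_Cons_le[OF col_le.hyps(1)] length_nzf_Cons_le[OF col_le.hyps(2)] by linarith
qed

lemma supp_marg_subset: "supp (marg R Y) \<subseteq> (\<lambda>r. r |` Y) ` supp R"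
proof
  fix t assume "t \<in> supp (marg R Y)"
  then have "marg R Y t \<noteq> 0"
    unfolding supp_def by simp
  then have "{r \<in> supp R. r |` Y = t} \<noteq> {}"
    unfolding marg_def by (metis sum.empty)
  then show "t \<in> (\<lambda>r. r |` Y) ` supp R"
    by blast
qed

lemma sum_card_fibres_le:
  assumes "finite F" and "finite A"
  shows "(\<Sum>w\<in>A. card {u \<in> F. f u = w}) \<le> card F"
proof -
  have "(\<Sum>w\<in>A. card {u \<in> F. f u = w}) = card (\<Union>w\<in>A. {u \<in> F. f u = w})"
    using assms by (intro card_UN_disjoint[symmetric]) auto
  also have "\<dots> \<le> card F"
    using assms(1) by (intro card_mono) auto
  finally show ?thesis .
qed

definition joined_tuples ::
    "('a \<rightharpoonup> 'v) list \<Rightarrow> ('a \<rightharpoonup> 'v) list \<Rightarrow> (nat \<times> nat \<Rightarrow> 'k::zero) \<Rightarrow> ('a \<rightharpoonup> 'v) set" where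
  "joined_tuples us vs x = (\<lambda>(i, j). (us ! i) ++ (vs ! j)) ` supp x"

lemma nwc_join_blocks:
  assumes "nwc_join X Y R S W"
  defines "Z \<equiv> X \<inter> Y"
  obtains us vs xs where
    "\<And>w. w \<in> supp (marg R Z) \<Longrightarrow> nwc (enum (map R (us w))) (enum (map S (vs w))) (xs w)"
    "\<And>w. w \<in> supp (marg R Z) \<Longrightarrow> length (us w) = card {u \<in> supp R. u |` Z = w}"
    "\<And>w. w \<in> supp (marg R Z) \<Longrightarrow> length (vs w) = card {v \<in> supp S. v |` Z = w}"
    "supp W \<subseteq> (\<Union>w\<in>supp (marg R Z). joined_tuples (us w) (vs w) (xs w))"
proof -
  obtain us vs xs where blocks: "\<forall>w\<in>supp (marg R Z).
      distinct (us w) \<and> set (us w) = {u \<in> supp R. u |` Z = w} \<and>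
      distinct (vs w) \<and> set (vs w) = {v \<in> supp S. v |` Z = w} \<and>
      nwc (enum (map R (us w))) (enum (map S (vs w))) (xs w) \<and>
      (\<forall>i<length (us w). \<forall>j<length (vs w). W ((us w ! i) ++ (vs w ! j)) = xs w (i, j))"
    and outside: "\<forall>t. (\<forall>w\<in>supp (marg R Z). \<forall>u\<in>supp R. \<forall>v\<in>supp S.
      u |` Z = w \<longrightarrow> v |` Z = w \<longrightarrow> t \<noteq> u ++ v) \<longrightarrow> W t = 0"
    using assms(1) unfolding nwc_join_def Z_def Let_def by blast
  have covered: "supp W \<subseteq> (\<Union>w\<in>supp (marg R Z). joined_tuples (us w) (vs w) (xs w))"
  proof
    fix t assume "t \<in> supp W"
    then have "W t \<noteq> 0"
      unfolding supp_def by simp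
    then obtain w u v where w: "w \<in> supp (marg R Z)"
      and u: "u \<in> supp R" "u |` Z = w" and v: "v \<in> supp S" "v |` Z = w" and t: "t = u ++ v"
      using outside by metis
    have "u \<in> set (us w)" and "v \<in> set (vs w)"
      using bspec[OF blocks w] u v by simp_all
    then obtain i j where i: "i < length (us w)" "us w ! i = u" and j: "j < length (vs w)" "vs w ! j = v"
      by (metis in_set_conv_nth)
    have "W ((us w ! i) ++ (vs w ! j)) = xs w (i, j)"
      using bspec[OF blocks w] i(1) j(1) by blast
    then have "xs w (i, j) = W t"
      using i j t by simp
    then have "(i, j) \<in> supp (xs w)"
      using \<open>t \<in> supp W\<close> unfolding supp_def by simp
    then show "t \<in> (\<Union>w\<in>supp (marg R Z). joined_tuples (us w) (vs w) (xs w))"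
      using w i j t unfolding joined_tuples_def by (auto intro!: rev_image_eqI)
  qed
  have "nwc (enum (map R (us w))) (enum (map S (vs w))) (xs w)"
    and "length (us w) = card {u \<in> supp R. u |` Z = w}"
    and "length (vs w) = card {v \<in> supp S. v |` Z = w}" if "w \<in> supp (marg R Z)" for w
    using bspec[OF blocks that] by (simp_all add: distinct_card[symmetric])
  then show ?thesis
    using covered by (rule that)
qed

lemma card_joined_tuples_le:
  assumes "nwc (enum as) (enum bs) x"
  shows "finite (joined_tuples us vs x)" and "card (joined_tuples us vs x) \<le> length as + length bs"
proof -
  show "finite (joined_tuples us vs x)"
    using finite_supp_nwc[OF assms] unfolding joined_tuples_def by simp
  have "card (joined_tuples us vs x) \<le> card (supp x)"
    using finite_supp_nwc[OF assms] unfolding joined_tuples_def by (rule card_image_le)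
  also have "\<dots> \<le> length as + length bs"
    using card_supp_nwc_le[OF assms] by simp
  finally show "card (joined_tuples us vs x) \<le> length as + length bs" .
qed

lemma card_supp_nwc_join_le:
  assumes "nwc_join X Y R S W" and "finite (supp R)" and "finite (supp S)"
  shows "card (supp W) \<le> card (supp R) + card (supp S)"
proof -
  let ?Z = "X \<inter> Y"
  let ?M = "supp (marg R ?Z)"
  obtain us vs xs where
    nwc: "\<And>w. w \<in> ?M \<Longrightarrow> nwc (enum (map R (us w))) (enum (map S (vs w))) (xs w)"
    and len_us: "\<And>w. w \<in> ?M \<Longrightarrow> length (us w) = card {u \<in> supp R. u |` ?Z = w}"
    and len_vs: "\<And>w. w \<in> ?M \<Longrightarrow> length (vs w) = card {v \<in> supp S. v |` ?Z = w}"
    and covered: "supp W \<subseteq> (\<Union>w\<in>?M. joined_tuples (us w) (vs w) (xs w))"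
    using nwc_join_blocks[OF assms(1)] by blast
  have fin_M: "finite ?M"
    by (rule finite_surj[OF assms(2) supp_marg_subset])
  have "card (supp W) \<le> card (\<Union>w\<in>?M. joined_tuples (us w) (vs w) (xs w))"
    using covered fin_M card_joined_tuples_le(1)[OF nwc] by (intro card_mono) auto
  also have "\<dots> \<le> (\<Sum>w\<in>?M. card (joined_tuples (us w) (vs w) (xs w)))"
    using fin_M by (rule card_UN_le)
  also have "\<dots> \<le> (\<Sum>w\<in>?M. card {u \<in> supp R. u |` ?Z = w} + card {v \<in> supp S. v |` ?Z = w})"
    using card_joined_tuples_le(2)[OF nwc] len_us len_vs by (intro sum_mono) fastforce
  also have "\<dots> \<le> card (supp R) + card (supp S)"
    unfolding sum.distrib
    using sum_card_fibres_le[OF assms(2) fin_M] sum_card_fibres_le[OF assms(3) fin_M]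
    by (rule add_mono)
  finally show ?thesis .
qed

theorem proposition25:
  fixes D :: "'a \<Rightarrow> 'v set" and X Y :: "'a set"
    and R S W :: "('a \<rightharpoonup> 'v) \<Rightarrow> 'k::comm_monoid_add"
  assumes positive: "\<forall>p q :: 'k. p + q = 0 \<longrightarrow> p = 0 \<and> q = 0"
    and icp: "nwc_icp TYPE('a \<times> 'v \<times> 'k)"
    and "finite X" and "finite Y"
    and "krel D X R" and "krel D Y S"
    and "inner_cons X Y R S"
    and "nwc_join X Y R S W"
  shows "card (supp W) \<le> card (supp R) + card (supp S)"
proof (rule card_supp_nwc_join_le)
  show "nwc_join X Y R S W" by fact
  show "finite (supp R)" and "finite (supp S)"
    using \<open>krel D X R\<close> \<open>krel D Y S\<close> unfolding krel_def by simp_all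
qed

end
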